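(* Let $(E,(\cdot,\cdot),\mathcal H)$ be an extended affine Lie algebra with root system $R$. Then $E$ is tame if and only if for each $\sigma\in R^0$, $$E_\sigma\cap E_c^\perp=Z(E_c)\cap\sum_{\alpha\in R^\times}[E_{\alpha+\sigma},E_{-\alpha}].$$
   Context: All Lie algebras are over $\mathbb C$. An extended affine Lie algebra (EALA) is a triple $(E,(\cdot,\cdot),\mathcal H)$ where $E$ is a Lie algebra, $\mathcal H$ a subalgebra and $(\cdot,\cdot)$ a bilinear form on $E$ such that: (EA1) the form is symmetric, non-degenerate and invariant; (EA2) $\mathcal H$ is finite-dimensional, $E=\bigoplus_{\alpha\in\mathcal H^*}E_\alpha$ with $E_\alpha=\{x:[h,x]=\alpha(h)x\ \forall h\in\mathcal H\}$ and $E_0=\mathcal H$; the root system is $R=\{\alpha:E_\alpha\neq0\}$ (with $E_\beta=0$ for $\beta\notin R$); $t_\alpha\in\mathcal H$ is given by $\alpha(h)=(h,t_\alpha)$, $(\alpha,\beta):=(t_\alpha,t_\beta)$, $R^\times=\{\alpha\in R:(\alpha,\alpha)\neq0\}$, $R^0=R\setminus R^\times$; (EA3) $\mathrm{ad}\,x$ is locally nilpotent for $x\in E_\alpha$, $\alpha\in R^\times$; (EA4) $R$ is discrete; (EA5) $R^\times$ is connected (not a union of two nonempty mutually orthogonal subsets) and every isotropic root is non-isolated. Root systems are assumed reduced. The core $E_c$ is the subalgebra generated by the $E_\alpha$, $\alpha\in R^\times$; $E_c^\perp$ is its orthogonal complement in $E$ and $Z(E_c)$ its center. $E$ is tame if $E_c^\perp=Z(E_c)$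 (equivalently $E_c^\perp\subseteq Z(E_c)$). *)

theory Defs
  imports Complex_Main
begin

definition lie_algebra :: "(complex \<Rightarrow> 'a::ab_group_add \<Rightarrow> 'a) \<Rightarrow> ('a \<Rightarrow> 'a \<Rightarrow> 'a) \<Rightarrow> bool" where
  "lie_algebra smul br \<longleftrightarrow>
     vector_space smul \<and>
     (\<forall>x y z. br (x + y) z = br x z + br y z) \<and>
     (\<forall>x y z. br x (y + z) = br x y + br x z) \<and>
     (\<forall>a x y. br (smul a x) y = smul a (br x y)) \<and>
     (\<forall>a x y. br x (smul a y) = smul a (br x y)) \<and>
     (\<forall>x. br x x = 0) \<and>
     (\<forall>x y z. br x (br y z) + br y (br z x) + br z (br x y) = 0)"

definition subalgebra :: "(complex \<Rightarrow> 'a::ab_group_add \<Rightarrow> 'a) \<Rightarrow> ('a \<Rightarrow> 'a \<Rightarrow> 'a) \<Rightarrow> 'a set \<Rightarrow> bool" where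
  "subalgebra smul br S \<longleftrightarrow> module.subspace smul S \<and> (\<forall>x\<in>S. \<forall>y\<in>S. br x y \<in> S)"

definition good_form :: "(complex \<Rightarrow> 'a::ab_group_add \<Rightarrow> 'a) \<Rightarrow> ('a \<Rightarrow> 'a \<Rightarrow> 'a) \<Rightarrow> ('a \<Rightarrow> 'a \<Rightarrow> complex) \<Rightarrow> bool" where
  "good_form smul br B \<longleftrightarrow>
     (\<forall>x y z. B (x + y) z = B x z + B y z) \<and>
     (\<forall>a x y. B (smul a x) y = a * B x y) \<and>
     (\<forall>x y. B x y = B y x) \<and>
     (\<forall>x. (\<forall>y. B x y = 0) \<longrightarrow> x = 0) \<and>
     (\<forall>x y z. B (br x y) z = B x (br y z))"

text \<open>The dual space of H: linear functionals on H, represented as functions on 'a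
that are linear on H and vanish outside H (so that each functional has a unique
representative).\<close>
definition hdual :: "(complex \<Rightarrow> 'a::ab_group_add \<Rightarrow> 'a) \<Rightarrow> 'a set \<Rightarrow> ('a \<Rightarrow> complex) set" where
  "hdual smul H = {\<alpha>. (\<forall>h\<in>H. \<forall>k\<in>H. \<forall>a b. \<alpha> (smul a h + smul b k) = a * \<alpha> h + b * \<alpha> k)
                      \<and> (\<forall>x. x \<notin> H \<longrightarrow> \<alpha> x = 0)}"

definition rootsp :: "(complex \<Rightarrow> 'a::ab_group_add \<Rightarrow> 'a) \<Rightarrow> ('a \<Rightarrow> 'a \<Rightarrow> 'a) \<Rightarrow> 'a set \<Rightarrow> ('a \<Rightarrow> complex) \<Rightarrow> 'a set" where
  "rootsp smul br H \<alpha> = {x. \<forall>h\<in>H. br h x = smul (\<alpha> h) x}"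

definition roots :: "(complex \<Rightarrow> 'a::ab_group_add \<Rightarrow> 'a) \<Rightarrow> ('a \<Rightarrow> 'a \<Rightarrow> 'a) \<Rightarrow> 'a set \<Rightarrow> ('a \<Rightarrow> complex) set" where
  "roots smul br H = {\<alpha> \<in> hdual smul H. rootsp smul br H \<alpha> \<noteq> {0}}"

definition tvec :: "('a \<Rightarrow> 'a \<Rightarrow> complex) \<Rightarrow> 'a set \<Rightarrow> ('a \<Rightarrow> complex) \<Rightarrow> 'a" where
  "tvec B H \<alpha> = (THE t. t \<in> H \<and> (\<forall>h\<in>H. \<alpha> h = B h t))"

definition rform :: "('a \<Rightarrow> 'a \<Rightarrow> complex) \<Rightarrow> 'a set \<Rightarrow> ('a \<Rightarrow> complex) \<Rightarrow> ('a \<Rightarrow> complex) \<Rightarrow> complex" where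
  "rform B H \<alpha> \<beta> = B (tvec B H \<alpha>) (tvec B H \<beta>)"

definition roots_nonisotropic where
  "roots_nonisotropic smul br B H = {\<alpha> \<in> roots smul br H. rform B H \<alpha> \<alpha> \<noteq> 0}"

definition roots_isotropic where
  "roots_isotropic smul br B H = roots smul br H - roots_nonisotropic smul br B H"

definition eala :: "(complex \<Rightarrow> 'a::ab_group_add \<Rightarrow> 'a) \<Rightarrow> ('a \<Rightarrow> 'a \<Rightarrow> 'a) \<Rightarrow> ('a \<Rightarrow> 'a \<Rightarrow> complex) \<Rightarrow> 'a set \<Rightarrow> bool" where
  "eala smul br B H \<longleftrightarrow>
     lie_algebra smul br \<and>
     \<comment> \<open>EA1\<close>
     good_form smul br B \<and>
     \<comment> \<open>EA2\<close>
     subalgebra smul br H \<and>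
     (\<exists>F. finite F \<and> F \<subseteq> H \<and> module.span smul F = H) \<and>
     (\<forall>x. \<exists>F f. finite F \<and> F \<subseteq> hdual smul H \<and> (\<forall>\<alpha>\<in>F. f \<alpha> \<in> rootsp smul br H \<alpha>) \<and> x = sum f F) \<and>
     (\<forall>F f. finite F \<and> F \<subseteq> hdual smul H \<and> (\<forall>\<alpha>\<in>F. f \<alpha> \<in> rootsp smul br H \<alpha>) \<and> sum f F = 0
        \<longrightarrow> (\<forall>\<alpha>\<in>F. f \<alpha> = 0)) \<and>
     rootsp smul br H (\<lambda>_. 0) = H \<and>
     \<comment> \<open>EA3\<close>
     (\<forall>\<alpha>\<in>roots_nonisotropic smul br B H. \<forall>x\<in>rootsp smul br H \<alpha>. \<forall>y. \<exists>n. (br x ^^ n) y = 0) \<and>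
     \<comment> \<open>EA4: R is discrete in H^* (topology of H^* = weak topology of evaluations)\<close>
     (\<forall>\<alpha>\<in>roots smul br H. \<exists>F \<epsilon>. finite F \<and> F \<subseteq> H \<and> \<epsilon> > 0 \<and>
        (\<forall>\<beta>\<in>roots smul br H. \<beta> \<noteq> \<alpha> \<longrightarrow> (\<exists>h\<in>F. \<epsilon> \<le> cmod (\<beta> h - \<alpha> h)))) \<and>
     \<comment> \<open>EA5(a): R^x connected\<close>
     \<not> (\<exists>P Q. P \<noteq> {} \<and> Q \<noteq> {} \<and> P \<union> Q = roots_nonisotropic smul br B H \<and>
            (\<forall>\<alpha>\<in>P. \<forall>\<beta>\<in>Q. rform B H \<alpha> \<beta> = 0)) \<and>
     \<comment> \<open>EA5(b): isotropic roots are non-isolated\<close>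
     (\<forall>\<delta>\<in>roots_isotropic smul br B H. \<exists>\<alpha>\<in>roots_nonisotropic smul br B H.
        (\<lambda>h. \<alpha> h + \<delta> h) \<in> roots smul br H) \<and>
     \<comment> \<open>reduced root system\<close>
     (\<forall>\<alpha>\<in>roots_nonisotropic smul br B H. (\<lambda>h. 2 * \<alpha> h) \<notin> roots smul br H)"

definition core where
  "core smul br B H = \<Inter>{S. subalgebra smul br S \<and>
      (\<Union>\<alpha>\<in>roots_nonisotropic smul br B H. rootsp smul br H \<alpha>) \<subseteq> S}"

definition orth :: "('a \<Rightarrow> 'a \<Rightarrow> complex) \<Rightarrow> 'a set \<Rightarrow> 'a set" where
  "orth B S = {x. \<forall>y\<in>S. B x y = 0}"

definition centre :: "('a \<Rightarrow> 'a \<Rightarrow> 'a::zero) \<Rightarrow> 'a set \<Rightarrow> 'a set" where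
  "centre br S = {x\<in>S. \<forall>y\<in>S. br x y = 0}"

definition tame where
  "tame smul br B H \<longleftrightarrow> orth B (core smul br B H) = centre br (core smul br B H)"

definition brsp where
  "brsp smul br A C = module.span smul {br x y | x y. x \<in> A \<and> y \<in> C}"

end

theory Submission
  imports Defs
begin

text \<open>
  The core \<open>E\<^sub>c\<close> is spanned by homogeneous elements: the root vectors of nonisotropic roots
  and the brackets \<open>[x, y]\<close> of such a root vector \<open>x \<in> E\<^sub>\<beta>\<close> with a homogeneous \<open>y \<in> E\<^sub>c \<inter> E\<^sub>\<gamma>\<close>.
  Hence the components of an element of \<open>E\<^sub>c\<close>, and, as \<open>E\<^sub>\<gamma> \<perp> E\<^sub>\<delta>\<close> unless \<open>\<gamma> + \<delta> = 0\<close>,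
  those of an element of \<open>E\<^sub>c\<^sup>\<perp>\<close>, stay in \<open>E\<^sub>c\<close> resp. \<open>E\<^sub>c\<^sup>\<perp>\<close>; and for isotropic \<open>\<sigma>\<close> the
  space \<open>E\<^sub>c \<inter> E\<^sub>\<sigma>\<close> is spanned by brackets \<open>[x, y]\<close> with \<open>\<beta> + \<gamma> = \<sigma>\<close>, so it lies in
  \<open>\<Sum>\<^sub>\<alpha>[E\<^sub>\<alpha>\<^sub>+\<^sub>\<sigma>, E\<^sub>-\<^sub>\<alpha>]\<close>. By invariance of the form, \<open>Z(E\<^sub>c) \<subseteq> E\<^sub>c\<^sup>\<perp>\<close> always holds
  (a root vector \<open>g \<in> E\<^sub>\<beta>\<close> is \<open>[t\<^sub>\<beta>, g] / (\<beta>, \<beta>)\<close> with \<open>t\<^sub>\<beta> \<in> E\<^sub>c\<close>).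

  If \<open>E\<close> is tame, \<open>E\<^sub>\<sigma> \<inter> E\<^sub>c\<^sup>\<perp> \<subseteq> Z(E\<^sub>c) \<inter> E\<^sub>\<sigma>\<close>, which lies in the bracket sum. Conversely,
  a component of weight \<open>\<gamma>\<close> of an element of \<open>E\<^sub>c\<^sup>\<perp>\<close> vanishes if \<open>\<gamma>\<close> is nonisotropic, since it
  is orthogonal to \<open>E\<^sub>-\<^sub>\<gamma> \<subseteq> E\<^sub>c\<close>, and is central by hypothesis if \<open>\<gamma>\<close> is isotropic.
\<close>

lemma hdual_uminus: "\<alpha> \<in> hdual smul H \<Longrightarrow> (\<lambda>h. - \<alpha> h) \<in> hdual smul H"
  unfolding hdual_def by (auto simp: algebra_simps)

lemma hdual_add: "\<alpha> \<in> hdual smul H \<Longrightarrow> \<beta> \<in> hdual smul H \<Longrightarrow> (\<lambda>h. \<alpha> h + \<beta> h) \<in> hdual smul H"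
  unfolding hdual_def by (auto simp: algebra_simps)

lemma hdual_zero: "(\<lambda>_. 0) \<in> hdual smul H"
  unfolding hdual_def by simp

locale lie_alg =
  fixes smul :: "complex \<Rightarrow> 'a::ab_group_add \<Rightarrow> 'a"
    and br :: "'a \<Rightarrow> 'a \<Rightarrow> 'a"
  assumes lie_algebra: "lie_algebra smul br"
begin

sublocale V: module smul
  using lie_algebra by (simp add: lie_algebra_def module_iff_vector_space)

lemma br_add_left: "br (x + y) z = br x z + br y z"
  using lie_algebra unfolding lie_algebra_def by blast

lemma br_add_right: "br x (y + z) = br x y + br x z"
  using lie_algebra unfolding lie_algebra_def by blast

lemma br_scale_left: "br (smul a x) y = smul a (br x y)"
  using lie_algebra unfolding lie_algebra_def by blast

lemma br_scale_right: "br x (smul a y) = smul a (br x y)"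
  using lie_algebra unfolding lie_algebra_def by blast

lemma br_self [simp]: "br x x = 0"
  using lie_algebra unfolding lie_algebra_def by blast

lemma jacobi: "br x (br y z) + br y (br z x) + br z (br x y) = 0"
  using lie_algebra unfolding lie_algebra_def by blast

lemma br_zero_left [simp]: "br 0 x = 0"
  using br_add_left[of 0 0 x] by simp

lemma br_zero_right [simp]: "br x 0 = 0"
  using br_add_right[of x 0 0] by simp

lemma br_minus_right: "br x (- y) = - br x y"
  using br_add_right[of x y "- y"] by (simp add: eq_neg_iff_add_eq_0 add.commute)

lemma br_anticomm: "br x y = - br y x"
proof -
  have "br (x + y) (x + y) = br x x + br x y + (br y x + br y y)"
    by (simp only: br_add_left br_add_right add_ac)
  then have "br x y + br y x = 0" by simp
  then show ?thesis by (simp add: eq_neg_iff_add_eq_0)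
qed

lemma br_br_left: "br (br a b) s = br a (br b s) - br b (br a s)"
proof -
  have "br a (br b s) + - br b (br a s) + - br (br a b) s = 0"
    using jacobi[of a b s] br_anticomm[of s a] br_anticomm[of s "br a b"] by (simp add: br_minus_right)
  then show ?thesis by (simp add: algebra_simps)
qed

lemma subspace_centre:
  assumes "V.subspace S" shows "V.subspace (centre br S)"
  using assms unfolding V.subspace_def centre_def by (simp add: br_add_left br_scale_left)

lemma br_span_right:
  assumes "V.subspace S" "\<And>g. g \<in> X \<Longrightarrow> br x g \<in> S" "s \<in> V.span X"
  shows "br x s \<in> S"
  using assms(3)
proof (induction rule: V.span_induct)
  case base
  show ?case using assms(1) unfolding V.subspace_def by (simp add: br_add_right br_scale_right)
qed (use assms(2) in blast)

lemma subalgebra_normalizer: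
  assumes S: "V.subspace S" shows "subalgebra smul br {a. \<forall>s\<in>S. br a s \<in> S}"
  unfolding subalgebra_def
proof (intro conjI ballI CollectI)
  show "V.subspace {a. \<forall>s\<in>S. br a s \<in> S}"
    using S unfolding V.subspace_def by (simp add: br_add_left br_scale_left)
  fix a b s assume "a \<in> {a. \<forall>s\<in>S. br a s \<in> S}" "b \<in> {a. \<forall>s\<in>S. br a s \<in> S}" "s \<in> S"
  then show "br (br a b) s \<in> S"
    unfolding br_br_left by (simp add: V.subspace_diff[OF S])
qed

lemma subspace_rootsp: "V.subspace (rootsp smul br H \<alpha>)"
  unfolding V.subspace_def rootsp_def
  by (simp add: br_add_right br_scale_right V.scale_right_distrib mult.commute)

lemma rootsp_br:
  assumes "x \<in> rootsp smul br H \<alpha>" "y \<in> rootsp smul br H \<beta>"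
  shows "br x y \<in> rootsp smul br H (\<lambda>h. \<alpha> h + \<beta> h)"
  unfolding rootsp_def
proof (intro CollectI ballI)
  fix h assume "h \<in> H"
  then have "br h x = smul (\<alpha> h) x" "br h y = smul (\<beta> h) y"
    using assms unfolding rootsp_def by auto
  then show "br h (br x y) = smul (\<alpha> h + \<beta> h) (br x y)"
    using br_br_left[of h x y] br_anticomm[of x "br h y"]
    by (simp add: br_scale_left br_scale_right br_minus_right V.scale_left_distrib)
qed

lemma brsp_rootsp_subset:
  "brsp smul br (rootsp smul br H \<alpha>) (rootsp smul br H \<beta>) \<subseteq> rootsp smul br H (\<lambda>h. \<alpha> h + \<beta> h)"
  unfolding brsp_def by (rule V.span_minimal[OF _ subspace_rootsp]) (auto intro: rootsp_br)

end

locale lie_alg_form = lie_alg +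
  fixes B :: "'a \<Rightarrow> 'a \<Rightarrow> complex"
  assumes good_form: "good_form smul br B"
begin

lemma form_add_left: "B (x + y) z = B x z + B y z"
  using good_form unfolding good_form_def by blast

lemma form_scale_left: "B (smul a x) y = a * B x y"
  using good_form unfolding good_form_def by blast

lemma form_sym: "B x y = B y x"
  using good_form unfolding good_form_def by blast

lemma form_nondegenerate: "(\<And>y. B x y = 0) \<Longrightarrow> x = 0"
  using good_form unfolding good_form_def by blast

lemma form_invariant: "B (br x y) z = B x (br y z)"
  using good_form unfolding good_form_def by blast

lemma form_add_right: "B x (y + z) = B x y + B x z"
  using form_add_left[of y z x] by (simp add: form_sym)

lemma form_scale_right: "B x (smul a y) = a * B x y"
  using form_scale_left[of a y x] by (simp add: form_sym)

lemma form_zero_right [simp]: "B x 0 = 0"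
  using form_add_right[of x 0 0] by simp

lemma form_zero_left [simp]: "B 0 x = 0"
  using form_sym[of 0 x] by simp

lemma form_minus_right: "B x (- y) = - B x y"
  using form_add_right[of x y "- y"] by (simp add: eq_neg_iff_add_eq_0 add.commute)

lemma form_minus_left: "B (- x) y = - B x y"
  using form_minus_right[of y x] by (simp add: form_sym)

lemma form_sum_right: "B x (sum f F) = (\<Sum>a\<in>F. B x (f a))"
  by (induction F rule: infinite_finite_induct) (auto simp: form_add_right)

lemma form_span_right:
  assumes "\<And>g. g \<in> X \<Longrightarrow> B v g = 0" "s \<in> V.span X" shows "B v s = 0"
  using assms(2)
proof (induction rule: V.span_induct)
  case base
  show ?case unfolding V.subspace_def by (auto simp: form_add_right form_scale_right)
qed (use assms(1) in blast)

lemma orth_span: "orth B (V.span X) = orth B X"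
proof
  show "orth B (V.span X) \<subseteq> orth B X"
    unfolding orth_def using V.span_superset by blast
  show "orth B X \<subseteq> orth B (V.span X)"
    unfolding orth_def using form_span_right by blast
qed

lemma form_rootsp_orth:
  assumes "\<alpha> \<in> hdual smul H" "\<delta> \<in> hdual smul H"
    and "x \<in> rootsp smul br H \<alpha>" "y \<in> rootsp smul br H \<delta>"
    and "(\<lambda>h. \<alpha> h + \<delta> h) \<noteq> (\<lambda>h. 0)"
  shows "B x y = 0"
proof -
  obtain h where h: "\<alpha> h + \<delta> h \<noteq> 0" using assms(5) by auto
  have "h \<in> H"
  proof (rule ccontr)
    assume "h \<notin> H"
    then have "\<alpha> h = 0" "\<delta> h = 0" using assms(1,2) unfolding hdual_def by auto
    with h show False by simp
  qed
  then have "br h x = smul (\<alpha> h) x" "br h y = smul (\<delta> h) y"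
    using assms(3,4) unfolding rootsp_def by auto
  then have "- (\<alpha> h * B x y) = \<delta> h * B x y"
    using form_invariant[of x h y] br_anticomm[of x h]
    by (simp add: form_minus_left form_scale_left form_scale_right)
  then have "(\<alpha> h + \<delta> h) * B x y = 0" by (metis distrib_right neg_eq_iff_add_eq_0)
  then show ?thesis using h by simp
qed

lemma form_br_rootsp:
  assumes "x \<in> rootsp smul br H \<alpha>" "h \<in> H" shows "B h (br x y) = \<alpha> h * B x y"
  using assms form_invariant[of h x y] unfolding rootsp_def by (simp add: form_scale_left)

end

locale extended_affine =
  fixes smul :: "complex \<Rightarrow> 'a::ab_group_add \<Rightarrow> 'a"
    and br :: "'a \<Rightarrow> 'a \<Rightarrow> 'a"
    and B :: "'a \<Rightarrow> 'a \<Rightarrow> complex"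
    and H :: "'a set"
  assumes eala: "eala smul br B H"
begin

sublocale lie_alg_form smul br B
  using eala unfolding eala_def by unfold_locales blast+

abbreviation E where "E \<alpha> \<equiv> rootsp smul br H \<alpha>"
abbreviation D where "D \<equiv> hdual smul H"
abbreviation R where "R \<equiv> roots smul br H"
abbreviation Rx where "Rx \<equiv> roots_nonisotropic smul br B H"
abbreviation R0 where "R0 \<equiv> roots_isotropic smul br B H"
abbreviation C where "C \<equiv> core smul br B H"

abbreviation root_brackets where
  "root_brackets \<sigma> \<equiv> V.span (\<Union>\<alpha>\<in>Rx. brsp smul br (E (\<lambda>h. \<alpha> h + \<sigma> h)) (E (\<lambda>h. - \<alpha> h)))"

lemma rootsp_decompE:
  obtains F f where "finite F" "F \<subseteq> D" "\<forall>\<alpha>\<in>F. f \<alpha> \<in> E \<alpha>" "x = sum f F"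
proof -
  have "\<forall>x. \<exists>F f. finite F \<and> F \<subseteq> D \<and> (\<forall>\<alpha>\<in>F. f \<alpha> \<in> E \<alpha>) \<and> x = sum f F"
    using eala unfolding eala_def by (elim conjE) assumption
  then show ?thesis using that by blast
qed

lemma rootsp_sum_eq_0:
  assumes "finite F" "F \<subseteq> D" "\<forall>\<alpha>\<in>F. f \<alpha> \<in> E \<alpha>" "sum f F = 0" "\<alpha> \<in> F"
  shows "f \<alpha> = 0"
proof -
  have "\<forall>F f. finite F \<and> F \<subseteq> D \<and> (\<forall>\<alpha>\<in>F. f \<alpha> \<in> E \<alpha>) \<and> sum f F = 0 \<longrightarrow> (\<forall>\<alpha>\<in>F. f \<alpha> = 0)"
    using eala unfolding eala_def by (elim conjE) assumption
  then show ?thesis using assms by blast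
qed

lemma rootsp_zero_eq: "E (\<lambda>_. 0) = H"
  using eala unfolding eala_def by (elim conjE) assumption

lemma subspace_H: "V.subspace H"
  using subspace_rootsp[of H "\<lambda>_. 0"] by (simp add: rootsp_zero_eq)

lemma root_hdual: "\<alpha> \<in> R \<Longrightarrow> \<alpha> \<in> D"
  unfolding roots_def by blast

lemma nonisotropic_root: "\<alpha> \<in> Rx \<Longrightarrow> \<alpha> \<in> R"
  unfolding roots_nonisotropic_def by blast

lemma isotropic_root: "\<sigma> \<in> R0 \<longleftrightarrow> \<sigma> \<in> R \<and> \<sigma> \<notin> Rx"
  unfolding roots_isotropic_def by blast

lemma rootsp_eq_0_if_not_root: "\<alpha> \<in> D \<Longrightarrow> \<alpha> \<notin> R \<Longrightarrow> x \<in> E \<alpha> \<Longrightarrow> x = 0"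
  unfolding roots_def using V.subspace_0[OF subspace_rootsp] by blast

lemma form_sum_rootsp:
  assumes "\<alpha> \<in> D" "x \<in> E \<alpha>" "finite F" "F \<subseteq> D" "\<forall>\<delta>\<in>F. f \<delta> \<in> E \<delta>"
  shows "B x (sum f F) = (if (\<lambda>h. - \<alpha> h) \<in> F then B x (f (\<lambda>h. - \<alpha> h)) else 0)"
proof -
  have "B x (f \<delta>) = (if \<delta> = (\<lambda>h. - \<alpha> h) then B x (f \<delta>) else 0)" if "\<delta> \<in> F" for \<delta>
  proof (cases "\<delta> = (\<lambda>h. - \<alpha> h)")
    case False
    then have "(\<lambda>h. \<alpha> h + \<delta> h) \<noteq> (\<lambda>h. 0)"
      by (metis add_eq_0_iff)
    then show ?thesis using form_rootsp_orth[OF assms(1) _ assms(2)] assms(4,5) that by auto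
  qed simp
  then have "B x (sum f F) = (\<Sum>\<delta>\<in>F. if \<delta> = (\<lambda>h. - \<alpha> h) then B x (f \<delta>) else 0)"
    unfolding form_sum_right by (rule sum.cong[OF refl])
  then show ?thesis using assms(3) by simp
qed

lemma root_pairing:
  assumes "\<alpha> \<in> D" "x \<in> E \<alpha>" "x \<noteq> 0"
  obtains y where "y \<in> E (\<lambda>h. - \<alpha> h)" "B x y \<noteq> 0"
proof -
  obtain y0 where "B x y0 \<noteq> 0" using form_nondegenerate assms(3) by blast
  moreover obtain F f where "finite F" "F \<subseteq> D" "\<forall>\<delta>\<in>F. f \<delta> \<in> E \<delta>" "y0 = sum f F"
    by (rule rootsp_decompE)
  ultimately show ?thesis
    using that form_sum_rootsp[OF assms(1,2)] by (metis (no_types, lifting))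
qed

lemma root_vectors_pairing:
  assumes "\<alpha> \<in> R"
  obtains x y where "x \<in> E \<alpha>" "y \<in> E (\<lambda>h. - \<alpha> h)" "B x y \<noteq> 0"
proof -
  obtain x where "x \<in> E \<alpha>" "x \<noteq> 0"
    using assms V.subspace_0[OF subspace_rootsp] unfolding roots_def by blast
  then show ?thesis using that root_pairing root_hdual[OF assms] by metis
qed

lemma form_nondegenerate_H:
  assumes "t \<in> H" "\<forall>h\<in>H. B h t = 0" shows "t = 0"
proof (rule form_nondegenerate)
  fix y
  obtain F f where F: "finite F" "F \<subseteq> D" "\<forall>\<delta>\<in>F. f \<delta> \<in> E \<delta>" "y = sum f F"
    by (rule rootsp_decompE)
  have "B t y = (if (\<lambda>_. 0) \<in> F then B t (f (\<lambda>_. 0)) else 0)"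
    using form_sum_rootsp[OF hdual_zero _ F(1-3)] assms(1) F(4) by (simp add: rootsp_zero_eq)
  also have "\<dots> = 0"
  proof (cases "(\<lambda>_. 0) \<in> F")
    case True
    then have "f (\<lambda>_. 0) \<in> H" using F(3) rootsp_zero_eq by blast
    then show ?thesis using True assms(2) form_sym[of t "f (\<lambda>_. 0)"] by simp
  qed simp
  finally show "B t y = 0" .
qed

lemma tvec_eqI:
  assumes "t \<in> H" "\<forall>h\<in>H. \<alpha> h = B h t" shows "tvec B H \<alpha> = t"
  unfolding tvec_def
proof (rule the_equality)
  fix t' assume t': "t' \<in> H \<and> (\<forall>h\<in>H. \<alpha> h = B h t')"
  have "B h (t' - t) = 0" if "h \<in> H" for h
  proof -
    have "B h (t' - t) = B h t' - B h t"
      by (simp only: diff_conv_add_uminus form_add_right form_minus_right)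
    then show ?thesis using assms(2) t' that by simp
  qed
  moreover have "t' - t \<in> H"
    using V.subspace_diff[OF subspace_H] assms(1) t' by blast
  ultimately show "t' = t"
    using form_nondegenerate_H by fastforce
qed (use assms in blast)

lemma br_opposite_rootsp_H: "x \<in> E \<alpha> \<Longrightarrow> y \<in> E (\<lambda>h. - \<alpha> h) \<Longrightarrow> br x y \<in> H"
  using rootsp_br[of x H \<alpha> y "\<lambda>h. - \<alpha> h"] by (simp add: rootsp_zero_eq)

lemma tvec_br:
  assumes x: "x \<in> E \<alpha>" and y: "y \<in> E (\<lambda>h. - \<alpha> h)" and xy: "B x y \<noteq> 0"
  shows "tvec B H \<alpha> = smul (1 / B x y) (br x y)"
    and "tvec B H \<alpha> \<in> H"
    and "\<forall>h\<in>H. \<alpha> h = B h (tvec B H \<alpha>)"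
proof -
  let ?t = "smul (1 / B x y) (br x y)"
  have t: "?t \<in> H"
    using V.subspace_scale[OF subspace_H br_opposite_rootsp_H[OF x y]] .
  have "\<forall>h\<in>H. \<alpha> h = B h ?t"
    using x xy by (simp add: form_scale_right form_br_rootsp)
  moreover from this show "tvec B H \<alpha> = ?t" by (rule tvec_eqI[OF t])
  ultimately show "tvec B H \<alpha> \<in> H" "\<forall>h\<in>H. \<alpha> h = B h (tvec B H \<alpha>)"
    using t by simp_all
qed

lemma uminus_root:
  assumes "\<alpha> \<in> R" shows "(\<lambda>h. - \<alpha> h) \<in> R"
proof -
  obtain x y where "y \<in> E (\<lambda>h. - \<alpha> h)" "B x y \<noteq> 0"
    using root_vectors_pairing[OF assms] .
  then show ?thesis
    unfolding roots_def using hdual_uminus root_hdual[OF assms] by fastforce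
qed

lemma uminus_nonisotropic_root:
  assumes "\<alpha> \<in> Rx" shows "(\<lambda>h. - \<alpha> h) \<in> Rx"
proof -
  have \<alpha>: "\<alpha> \<in> R" using assms nonisotropic_root by blast
  obtain x y where x: "x \<in> E \<alpha>" and y: "y \<in> E (\<lambda>h. - \<alpha> h)" and xy: "B x y \<noteq> 0"
    using root_vectors_pairing[OF \<alpha>] .
  have "tvec B H (\<lambda>h. - \<alpha> h) = smul (1 / B y x) (br y x)"
    using tvec_br(1)[of y "\<lambda>h. - \<alpha> h" x] x y xy form_sym[of y x] by simp
  also have "\<dots> = - tvec B H \<alpha>"
    using tvec_br(1)[OF x y xy] form_sym[of y x] br_anticomm[of y x] by (simp add: V.scale_minus_right)
  finally have "rform B H (\<lambda>h. - \<alpha> h) (\<lambda>h. - \<alpha> h) = rform B H \<alpha> \<alpha>"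
    unfolding rform_def by (simp add: form_minus_left form_minus_right)
  then show ?thesis
    using assms uminus_root[OF \<alpha>] unfolding roots_nonisotropic_def by simp
qed

lemma subalgebra_core: "subalgebra smul br C"
  unfolding core_def subalgebra_def by (auto intro!: V.subspace_Inter)

lemma subspace_core: "V.subspace C"
  using subalgebra_core unfolding subalgebra_def by blast

lemma core_br: "x \<in> C \<Longrightarrow> y \<in> C \<Longrightarrow> br x y \<in> C"
  using subalgebra_core unfolding subalgebra_def by blast

lemma nonisotropic_rootsp_subset_core: "\<alpha> \<in> Rx \<Longrightarrow> E \<alpha> \<subseteq> C"
  unfolding core_def by blast

lemma core_minimal: "subalgebra smul br S \<Longrightarrow> (\<And>\<alpha>. \<alpha> \<in> Rx \<Longrightarrow> E \<alpha> \<subseteq> S) \<Longrightarrow> C \<subseteq> S"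
  unfolding core_def by blast

lemma nonisotropic_tvec:
  assumes "\<beta> \<in> Rx"
  shows "tvec B H \<beta> \<in> C" "tvec B H \<beta> \<in> H" "\<beta> (tvec B H \<beta>) \<noteq> 0"
proof -
  obtain x y where x: "x \<in> E \<beta>" and y: "y \<in> E (\<lambda>h. - \<beta> h)" and xy: "B x y \<noteq> 0"
    using root_vectors_pairing[OF nonisotropic_root[OF assms]] .
  have "x \<in> C" "y \<in> C"
    using x y assms uminus_nonisotropic_root nonisotropic_rootsp_subset_core by blast+
  then show "tvec B H \<beta> \<in> C"
    unfolding tvec_br(1)[OF x y xy] by (intro V.subspace_scale[OF subspace_core] core_br)
  show "tvec B H \<beta> \<in> H" by (rule tvec_br(2)[OF x y xy])
  then have "\<beta> (tvec B H \<beta>) = rform B H \<beta> \<beta>"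
    using tvec_br(3)[OF x y xy] unfolding rform_def by blast
  then show "\<beta> (tvec B H \<beta>) \<noteq> 0"
    using assms unfolding roots_nonisotropic_def by simp
qed

text \<open>Generators are recorded together with their weight, since \<open>0\<close> lies in every weight space.\<close>

definition core_gens :: "('a \<times> ('a \<Rightarrow> complex)) set" where
  "core_gens = {(x, \<beta>) | x \<beta>. \<beta> \<in> Rx \<and> x \<in> E \<beta>} \<union>
     {(br x y, \<lambda>h. \<beta> h + \<gamma> h) | x y \<beta> \<gamma>. \<beta> \<in> Rx \<and> x \<in> E \<beta> \<and> \<gamma> \<in> D \<and> y \<in> C \<inter> E \<gamma>}"

lemma core_gens_rootsp: "(g, w) \<in> core_gens \<Longrightarrow> w \<in> D \<and> g \<in> E w"
  unfolding core_gens_def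
  using root_hdual[OF nonisotropic_root] hdual_add rootsp_br by fastforce

lemma core_gens_core: "(g, w) \<in> core_gens \<Longrightarrow> g \<in> C"
  unfolding core_gens_def using nonisotropic_rootsp_subset_core core_br by blast

lemma core_eq_span_core_gens: "C = V.span (fst ` core_gens)"
proof
  let ?S = "V.span (fst ` core_gens)"
  show span_core: "?S \<subseteq> C"
    using core_gens_core by (intro V.span_minimal[OF _ subspace_core]) auto
  have br_gen: "br x s \<in> ?S" if \<beta>: "\<beta> \<in> Rx" "x \<in> E \<beta>" and s: "s \<in> ?S" for x \<beta> s
  proof (rule br_span_right[OF V.subspace_span _ s])
    fix g assume "g \<in> fst ` core_gens"
    then obtain w where "(g, w) \<in> core_gens" by force
    then have "w \<in> D" "g \<in> C \<inter> E w" using core_gens_rootsp core_gens_core by blast+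
    then have "(br x g, \<lambda>h. \<beta> h + w h) \<in> core_gens" unfolding core_gens_def using \<beta> by blast
    then show "br x g \<in> ?S" by (intro V.span_base) force
  qed
  have "C \<subseteq> {a. \<forall>s\<in>?S. br a s \<in> ?S}"
    using br_gen by (intro core_minimal[OF subalgebra_normalizer[OF V.subspace_span]]) blast
  then have "subalgebra smul br ?S"
    using span_core unfolding subalgebra_def by blast
  moreover have "E \<alpha> \<subseteq> ?S" if "\<alpha> \<in> Rx" for \<alpha>
    using that unfolding core_gens_def by (auto intro!: V.span_base image_eqI)
  ultimately show "C \<subseteq> ?S" by (rule core_minimal)
qed

lemma span_rootsp_component:
  assumes X: "\<And>g w. (g, w) \<in> X \<Longrightarrow> w \<in> D \<and> g \<in> E w"
    and z: "z \<in> V.span (fst ` X)" "z \<in> E \<sigma>" and \<sigma>: "\<sigma> \<in> D"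
  shows "z \<in> V.span {g. (g, \<sigma>) \<in> X}"
proof -
  obtain t r where t: "finite t" "t \<subseteq> X" and z_eq: "z = (\<Sum>p\<in>t. smul (r p) (fst p))"
  proof -
    obtain t0 r0 where t0: "finite t0" "t0 \<subseteq> fst ` X" "z = (\<Sum>g\<in>t0. smul (r0 g) g)"
      using z(1) unfolding V.span_explicit by blast
    then obtain t where "t \<subseteq> X" "inj_on fst t" "t0 = fst ` t"
      by (auto simp: subset_image_inj)
    with t0 show ?thesis
      using that[of t "\<lambda>p. r0 (fst p)"] by (simp add: sum.reindex finite_image_iff)
  qed
  define part where "part w = (\<Sum>p\<in>{p \<in> t. snd p = w}. smul (r p) (fst p))" for w
  define F where "F = insert \<sigma> (snd ` t)"
  define f where "f w = part w - (if w = \<sigma> then z else 0)" for w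
  have F: "finite F" "F \<subseteq> D"
    using t X \<sigma> unfolding F_def by force+
  have "part w \<in> E w" for w
    unfolding part_def using t X
    by (intro V.subspace_sum[OF subspace_rootsp] V.subspace_scale[OF subspace_rootsp]) force
  then have "\<forall>w\<in>F. f w \<in> E w"
    unfolding f_def using z(2) V.subspace_0[OF subspace_rootsp] V.subspace_diff[OF subspace_rootsp]
    by simp
  moreover have "sum part F = z"
    unfolding part_def z_eq using t F(1) by (intro sum.group) (auto simp: F_def)
  then have "sum f F = 0"
    unfolding f_def using F(1) by (simp add: sum_subtractf F_def)
  ultimately have "f \<sigma> = 0"
    using rootsp_sum_eq_0[OF F] by (simp add: F_def)
  then have "z = part \<sigma>" by (simp add: f_def)
  also have "\<dots> \<in> V.span {g. (g, \<sigma>) \<in> X}"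
    unfolding part_def using t by (intro V.span_sum V.span_scale V.span_base) force
  finally show ?thesis .
qed

lemma orth_rootsp_component:
  assumes X: "\<And>g w. (g, w) \<in> X \<Longrightarrow> w \<in> D \<and> g \<in> E w"
    and z: "z \<in> orth B (fst ` X)"
    and F: "finite F" "F \<subseteq> D" "\<forall>\<delta>\<in>F. f \<delta> \<in> E \<delta>" "z = sum f F" and \<gamma>: "\<gamma> \<in> F"
  shows "f \<gamma> \<in> orth B (fst ` X)"
  unfolding orth_def
proof (intro CollectI ballI)
  fix g assume "g \<in> fst ` X"
  then obtain w where gw: "(g, w) \<in> X" by force
  then have w: "w \<in> D" "g \<in> E w" using X by blast+
  show "B (f \<gamma>) g = 0"
  proof (cases "\<gamma> = (\<lambda>h. - w h)")
    case True
    have "B g z = B g (f \<gamma>)"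
      using form_sum_rootsp[OF w F(1-3)] F(4) \<gamma> True by simp
    moreover have "B z g = 0" using z gw unfolding orth_def by force
    ultimately show ?thesis by (simp add: form_sym)
  next
    case False
    then have "(\<lambda>h. \<gamma> h + w h) \<noteq> (\<lambda>h. 0)" by (metis add_eq_0_iff2)
    then show ?thesis using form_rootsp_orth w F(2,3) \<gamma> by blast
  qed
qed

lemma orth_core_nonisotropic_rootsp:
  assumes "\<gamma> \<in> Rx" "v \<in> E \<gamma>" "v \<in> orth B C" shows "v = 0"
proof (rule form_nondegenerate)
  fix y
  obtain F f where F: "finite F" "F \<subseteq> D" "\<forall>\<delta>\<in>F. f \<delta> \<in> E \<delta>" "y = sum f F"
    by (rule rootsp_decompE)
  have "f (\<lambda>h. - \<gamma> h) \<in> C" if "(\<lambda>h. - \<gamma> h) \<in> F"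
    using that F(3) nonisotropic_rootsp_subset_core[OF uminus_nonisotropic_root[OF assms(1)]] by blast
  then show "B v y = 0"
    using form_sum_rootsp[OF root_hdual[OF nonisotropic_root[OF assms(1)]] assms(2) F(1-3)] F(4) assms(3)
    unfolding orth_def by auto
qed

lemma centre_core_subset_orth: "centre br C \<subseteq> orth B C"
proof
  fix z assume z: "z \<in> centre br C"
  have "B z g = 0" if "(g, w) \<in> core_gens" for g w
    using that unfolding core_gens_def
  proof safe
    fix \<beta> assume \<beta>: "\<beta> \<in> Rx" "g \<in> E \<beta>"
    let ?t = "tvec B H \<beta>"
    have "B z (br ?t g) = B (br z ?t) g" by (simp add: form_invariant)
    also have "\<dots> = 0" using z nonisotropic_tvec(1)[OF \<beta>(1)] unfolding centre_def by simp
    finally show "B z g = 0"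
      using \<beta>(2) nonisotropic_tvec(2,3)[OF \<beta>(1)] unfolding rootsp_def by (simp add: form_scale_right)
  next
    fix x y \<beta> assume "\<beta> \<in> Rx" "x \<in> E \<beta>"
    then have "br z x = 0" using z nonisotropic_rootsp_subset_core unfolding centre_def by blast
    then show "B z (br x y) = 0" by (simp flip: form_invariant)
  qed
  then have "z \<in> orth B (fst ` core_gens)" unfolding orth_def by force
  then show "z \<in> orth B C" by (simp add: core_eq_span_core_gens orth_span)
qed

lemma root_brackets_subset_rootsp: "root_brackets \<sigma> \<subseteq> E \<sigma>"
proof (intro V.span_minimal[OF _ subspace_rootsp] UN_least)
  fix \<alpha>
  show "brsp smul br (E (\<lambda>h. \<alpha> h + \<sigma> h)) (E (\<lambda>h. - \<alpha> h)) \<subseteq> E \<sigma>"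
    using brsp_rootsp_subset[of H "\<lambda>h. \<alpha> h + \<sigma> h" "\<lambda>h. - \<alpha> h"] by simp
qed

lemma core_gens_isotropic:
  assumes "(g, \<sigma>) \<in> core_gens" "\<sigma> \<notin> Rx" shows "g \<in> root_brackets \<sigma>"
proof -
  obtain x y \<beta> \<gamma> where \<beta>: "\<beta> \<in> Rx" and x: "x \<in> E \<beta>" and y: "y \<in> E \<gamma>"
    and g: "g = br x y" and \<sigma>: "\<sigma> = (\<lambda>h. \<beta> h + \<gamma> h)"
    using assms unfolding core_gens_def by blast
  define \<alpha> where "\<alpha> = (\<lambda>h. - \<beta> h)"
  have "(\<lambda>h. \<alpha> h + \<sigma> h) = \<gamma>" "(\<lambda>h. - \<alpha> h) = \<beta>" unfolding \<alpha>_def \<sigma> by simp_all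
  then have "br y x \<in> brsp smul br (E (\<lambda>h. \<alpha> h + \<sigma> h)) (E (\<lambda>h. - \<alpha> h))"
    unfolding brsp_def using x y by (intro V.span_base) blast
  moreover have "\<alpha> \<in> Rx" unfolding \<alpha>_def by (rule uminus_nonisotropic_root[OF \<beta>])
  ultimately have "br y x \<in> root_brackets \<sigma>" by (blast intro: V.span_base)
  then show ?thesis unfolding g by (subst br_anticomm) (rule V.span_neg)
qed

lemma tame_isotropic_rootsp_orth:
  assumes "tame smul br B H" "\<sigma> \<in> R0"
  shows "E \<sigma> \<inter> orth B C = centre br C \<inter> root_brackets \<sigma>"
proof
  have \<sigma>: "\<sigma> \<in> D" "\<sigma> \<notin> Rx" using assms(2) isotropic_root root_hdual by blast+
  show "E \<sigma> \<inter> orth B C \<subseteq> centre br C \<inter> root_brackets \<sigma>"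
  proof
    fix z assume z: "z \<in> E \<sigma> \<inter> orth B C"
    then have centre: "z \<in> centre br C" using assms(1) unfolding tame_def by blast
    then have "z \<in> V.span (fst ` core_gens)"
      using core_eq_span_core_gens unfolding centre_def by blast
    then have "z \<in> V.span {g. (g, \<sigma>) \<in> core_gens}"
      using span_rootsp_component core_gens_rootsp z \<sigma>(1) by blast
    also have "\<dots> \<subseteq> root_brackets \<sigma>"
      using core_gens_isotropic \<sigma>(2) by (intro V.span_minimal) auto
    finally show "z \<in> centre br C \<inter> root_brackets \<sigma>" using centre by blast
  qed
  show "centre br C \<inter> root_brackets \<sigma> \<subseteq> E \<sigma> \<inter> orth B C"
    using centre_core_subset_orth root_brackets_subset_rootsp by blast
qed

lemma tame_if_isotropic_rootsp_orth:
  assumes iso: "\<And>\<sigma>. \<sigma> \<in> R0 \<Longrightarrow> E \<sigma> \<inter> orth B C \<subseteq> centre br C"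
  shows "tame smul br B H"
proof -
  have "z \<in> centre br C" if z: "z \<in> orth B C" for z
  proof -
    obtain F f where F: "finite F" "F \<subseteq> D" "\<forall>\<delta>\<in>F. f \<delta> \<in> E \<delta>" "z = sum f F"
      by (rule rootsp_decompE)
    have "f \<gamma> \<in> centre br C" if \<gamma>: "\<gamma> \<in> F" for \<gamma>
    proof -
      have orth: "f \<gamma> \<in> orth B C"
        using orth_rootsp_component[OF core_gens_rootsp _ F \<gamma>] z
        by (simp add: core_eq_span_core_gens orth_span)
      have "\<gamma> \<in> D" "f \<gamma> \<in> E \<gamma>" using F \<gamma> by blast+
      then consider "\<gamma> \<in> R0" | "f \<gamma> = 0"
        using isotropic_root rootsp_eq_0_if_not_root orth_core_nonisotropic_rootsp orth by blast
      then show ?thesis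
        using iso orth \<open>f \<gamma> \<in> E \<gamma>\<close> V.subspace_0[OF subspace_centre[OF subspace_core]] by cases (blast, simp)
    qed
    then show "z \<in> centre br C"
      unfolding F(4) by (rule V.subspace_sum[OF subspace_centre[OF subspace_core]])
  qed
  then show ?thesis
    unfolding tame_def using centre_core_subset_orth by blast
qed

end

theorem lemma2p7:
  fixes smul :: "complex \<Rightarrow> 'a::ab_group_add \<Rightarrow> 'a"
    and br :: "'a \<Rightarrow> 'a \<Rightarrow> 'a"
    and B :: "'a \<Rightarrow> 'a \<Rightarrow> complex"
    and H :: "'a set"
  assumes "eala smul br B H"
  shows "tame smul br B H \<longleftrightarrow>
    (\<forall>\<sigma>\<in>roots_isotropic smul br B H.
       rootsp smul br H \<sigma> \<inter> orth B (core smul br B H) =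
       centre br (core smul br B H) \<inter>
       module.span smul (\<Union>\<alpha>\<in>roots_nonisotropic smul br B H.
          brsp smul br (rootsp smul br H (\<lambda>h. \<alpha> h + \<sigma> h)) (rootsp smul br H (\<lambda>h. - \<alpha> h))))"
proof -
  interpret extended_affine smul br B H by (rule extended_affine.intro[OF assms])
  show ?thesis
    using tame_isotropic_rootsp_orth tame_if_isotropic_rootsp_orth by blast
qed

end
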